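(* Consider the three-dimensional stochastic Maxwell equations in the stochastic Hamiltonian form $$\mathbf{K}\,{\rm d}_{t}\mathcal{E}+\mathbf{L}_{1}\mathcal{E}_{x}{\rm d}t+\mathbf{L}_{2}\mathcal{E}_{y}{\rm d}t+\mathbf{L}_{3}\mathcal{E}_{z}{\rm d}t=\nabla S(\mathcal{E})\circ{\rm d}W(t)$$ with periodic boundary conditions, discretized by the stochastic Runge-Kutta method described in the context, whose coefficients satisfy $b_kb_j-b_ka_{kj}-b_ja_{jk}=0$, $\overline{b}_p\overline{b}_q-\overline{b}_p\overline{a}_{pq}-\overline{b}_q\overline a_{qp}=0$, $\widetilde{b}_m\widetilde{b}_n-\widetilde{b}_m\widetilde{a}_{mn}-\widetilde{b}_n\widetilde{a}_{nm}=0$, $\widehat{b}_l\widehat{b}_v-\widehat{b}_l\widehat{a}_{lv}-\widehat{b}_v\widehat{a}_{vl}=0$ for all indices. Then for all $\rho=0,1,\dots,N$, almost surely, $$\sum_{i_1}\sum_{i_2}\sum_{i_3}\sum_{m=1}^{s}\sum_{p=1}^{\iota}\sum_{l=1}^{\sigma}\widetilde{b}_{m}\overline{b}_p\widehat{b}_l\Big(|\mathbf{E}_{mpl;i_1,i_2,i_3}^{\rho+1}|^2+|\mathbf{H}_{mpl;i_1,i_2,i_3}^{\rho+1}|^2\Big)=\sum_{i_1}\sum_{i_2}\sum_{i_3}\sum_{m=1}^{s}\sum_{p=1}^{\iota}\sum_{l=1}^{\sigma}\widetilde{b}_{m}\overline{b}_p\widehat{b}_l\Big(|\mathbf{E}_{mpl;i_1,i_2,i_3}^{\rho}|^2+|\mathbf{H}_{mpl;i_1,i_2,i_3}^{\rho}|^2\Big),$$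 where the sums over $i_1,i_2,i_3$ run over all spatial cells of the periodic grid.
   Context: $\mathcal{E}=(H^T,E^T)^T\in\mathbb{R}^6$; $S(\mathcal{E})=\frac{\lambda}{2}(|E_1|^2+|E_2|^2+|E_3|^2+|H_1|^2+|H_2|^2+|H_3|^2)$ for a real constant $\lambda$; $\mathbf{K}=\begin{pmatrix}0&-I_3\\ I_3&0\end{pmatrix}$, $\mathbf{L}_i=\begin{pmatrix}\mathcal{D}_i&0\\0&\mathcal{D}_i\end{pmatrix}$ with $\mathcal{D}_1=\begin{pmatrix}0&0&0\\0&0&-1\\0&1&0\end{pmatrix}$, $\mathcal{D}_2=\begin{pmatrix}0&0&1\\0&0&0\\-1&0&0\end{pmatrix}$, $\mathcal{D}_3=\begin{pmatrix}0&-1&0\\1&0&0\\0&0&0\end{pmatrix}$; $W$ is a $Q$-Wiener process, Stratonovich sense. The method (time step $\tau$, space steps $\Delta x,\Delta y,\Delta z$; temporal coefficients $a_{kj},b_k$, $k,j=1..r$; spatial coefficients $\widetilde{a}_{mn},\widetilde{b}_m$ ($s$ stages, $x$), $\overline{a}_{pq},\overline{b}_p$ ($\iota$ stages, $y$), $\widehat{a}_{lv},\widehat{b}_l$ ($\sigma$ stages, $z$)) has on each space-time cell stage values $\Upsilon_{mplk}\in\mathbb{R}^6$, discrete derivatives $\delta_t\Upsilon,\delta_x\Upsilon,\delta_y\Upsilon,\delta_z\Upsilon$, time-level values $\mathcal{E}^\rho_{mpl}$ and face values, related by $\Upsilon_{mplk}=\mathcal{E}_{mpl}^{\rho}+\tau\sum_{j}a_{kj}\delta_t\Upsilon_{mplj}$,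 $\mathcal{E}_{mpl}^{\rho+1}=\mathcal{E}_{mpl}^{\rho}+\tau\sum_{k}b_{k}\delta_t\Upsilon_{mplk}$, $\Upsilon_{mplk}=\mathcal{E}_{i_1pl}^{k}+\Delta x\sum_{n}\widetilde{a}_{mn}\delta_{x}\Upsilon_{nplk}$, $\mathcal{E}_{(i_1+1)pl}^{k}=\mathcal{E}_{i_1pl}^{k}+\Delta x\sum_{m}\widetilde{b}_{m}\delta_{x}\Upsilon_{mplk}$, $\Upsilon_{mplk}=\mathcal{E}_{mi_2l}^{k}+\Delta y\sum_{q}\overline{a}_{pq}\delta_{y}\Upsilon_{mqlk}$, $\mathcal{E}_{m(i_{2}+1)l}^{k}=\mathcal{E}_{mi_2l}^{k}+\Delta y\sum_{p}\overline{b}_{p}\delta_{y}\Upsilon_{mplk}$, $\Upsilon_{mplk}=\mathcal{E}_{mpi_3}^{k}+\Delta z\sum_{v}\widehat{a}_{lv}\delta_{z}\Upsilon_{mpvk}$, $\mathcal{E}_{mp(i_3+1)}^{k}=\mathcal{E}_{mpi_3}^{k}+\Delta z\sum_{u}\widehat{b}_{u}\delta_{z}\Upsilon_{mpuk}$, $\tau\mathbf{K}\delta_{t}\Upsilon_{mplk}+\tau\sum_{i=1}^3\mathbf{L}_{i}\delta_{x_i}\Upsilon_{mplk}=\nabla S(\Upsilon_{mplk})\Delta W$, with $(\delta_{x_1},\delta_{x_2},\delta_{x_3})=(\delta_x,\delta_y,\delta_z)$ and $\Delta W$ the real Wiener increment at the stage point. $\mathcal{E}^{\rho}_{mpl;i_1,i_2,i_3}=((\mathbf{H}^{\rho}_{mpl;i_1,i_2,i_3})^T,(\mathbf{E}^{\rho}_{mpl;i_1,i_2,i_3})^T)^T$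 denotes the value $\mathcal{E}^\rho_{mpl}$ of the spatial cell indexed by $(i_1,i_2,i_3)$. *)

theory Defs
  imports "HOL-Analysis.Analysis"
begin

text \<open>A field value \<E> = (H, E) in R^6 is represented as a pair of vectors in R^3:
  the first component is the magnetic field H, the second the electric field E.\<close>
type_synonym field6 = "(real^3) \<times> (real^3)"

definition Hpart :: "field6 \<Rightarrow> real^3" where "Hpart v = fst v"
definition Epart :: "field6 \<Rightarrow> real^3" where "Epart v = snd v"

text \<open>K = [[0, -I3], [I3, 0]] acting on (H, E).\<close>
definition Kop :: "field6 \<Rightarrow> field6" where
  "Kop v = (- snd v, fst v)"

definition D1 :: "real^3^3" where
  "D1 = vector [vector [0, 0, 0], vector [0, 0, -1], vector [0, 1, 0]]"
definition D2 :: "real^3^3" where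
  "D2 = vector [vector [0, 0, 1], vector [0, 0, 0], vector [-1, 0, 0]]"
definition D3 :: "real^3^3" where
  "D3 = vector [vector [0, -1, 0], vector [1, 0, 0], vector [0, 0, 0]]"

definition Lop :: "real^3^3 \<Rightarrow> field6 \<Rightarrow> field6" where
  "Lop D v = (D *v fst v, D *v snd v)"

definition S :: "real \<Rightarrow> field6 \<Rightarrow> real" where
  "S lam v = lam / 2 * ((norm (snd v))\<^sup>2 + (norm (fst v))\<^sup>2)"
definition gradS :: "real \<Rightarrow> field6 \<Rightarrow> field6" where
  "gradS lam v = lam *\<^sub>R v"

end

theory Submission
  imports Defs
begin

(* A symplectic Runge-Kutta step preserves quadratic forms exactly: if F' = F + h \<Sigma>_k b_k D_k with
   stages Y_k = F + h \<Sigma>_j a_kj D_j and b_k b_j = b_k a_kj + b_j a_jk, then for every self-adjoint f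
   the increment of <F, f F> is 2 h \<Sigma>_k b_k <Y_k, f D_k>.  In time (f = id) this expresses the change
   of the cell energy through <Y_k, \<delta>_t Y_k>.  Pairing the discrete Maxwell equation with K Y_k
   removes the noise term, because \<nabla>S(Y) = \<lambda> Y is orthogonal to K Y, and leaves three spatial
   fluxes <Y, K^T L_i \<delta>_i Y>.  Since the D_i are skew, K^T L_i is self-adjoint, so the same identity
   along a grid line in direction i turns the weighted flux into the difference of <F, K^T L_i F> at
   consecutive faces; these telescope to zero around the periodic line. *)

lemma skew_matrix_inner:
  fixes D :: "real^'n^'n"
  assumes skew: "\<And>i j. D$i$j = - D$j$i"
  shows "inner x (D *v y) = - inner y (D *v x)"
proof -
  have "inner x (D *v y) = (\<Sum>i\<in>UNIV. \<Sum>j\<in>UNIV. x$i * D$i$j * y$j)"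
    by (simp add: inner_vec_def matrix_vector_mult_def sum_distrib_left mult.assoc)
  also have "\<dots> = (\<Sum>j\<in>UNIV. \<Sum>i\<in>UNIV. - (y$j * D$j$i * x$i))"
  proof -
    have "x$i * D$i$j * y$j = - (y$j * D$j$i * x$i)" for i j
      by (subst skew) (simp add: algebra_simps)
    then show ?thesis by (subst sum.swap) simp
  qed
  also have "\<dots> = - inner y (D *v x)"
    by (simp add: inner_vec_def matrix_vector_mult_def sum_distrib_left mult.assoc sum_negf)
  finally show ?thesis .
qed

lemma skew_D1: "D1$i$j = - D1$j$i"
  using exhaust_3[of i] exhaust_3[of j] by (auto simp: D1_def)

lemma skew_D2: "D2$i$j = - D2$j$i"
  using exhaust_3[of i] exhaust_3[of j] by (auto simp: D2_def)

lemma skew_D3: "D3$i$j = - D3$j$i"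
  using exhaust_3[of i] exhaust_3[of j] by (auto simp: D3_def)

(* K^T L_D *)
definition KtL :: "real^3^3 \<Rightarrow> field6 \<Rightarrow> field6" where
  "KtL D v = (D *v snd v, - (D *v fst v))"

lemma inner_Kop_Lop: "inner (Kop u) (Lop D v) = inner u (KtL D v)"
  by (cases u, cases v) (simp add: Kop_def Lop_def KtL_def)

lemma inner_Kop_Kop: "inner (Kop u) (Kop v) = inner u v"
  by (cases u, cases v) (simp add: Kop_def)

lemma inner_Kop_self: "inner (Kop u) u = 0"
  by (cases u) (simp add: Kop_def inner_commute)

lemma linear_KtL: "linear (KtL D)"
  by (rule linearI) (auto simp: KtL_def matrix_vector_right_distrib matrix_vector_mult_scaleR)

lemma KtL_self_adjoint:
  assumes "\<And>i j. D$i$j = - D$j$i"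
  shows "inner u (KtL D v) = inner v (KtL D u)"
  using skew_matrix_inner[OF assms, of "fst u" "snd v"] skew_matrix_inner[OF assms, of "snd u" "fst v"]
  by (cases u, cases v) (simp add: KtL_def)

lemma maxwell_stage_energy_balance:
  assumes "tau \<noteq> 0"
    and "tau *\<^sub>R Kop Vt + tau *\<^sub>R (Lop A1 Vx + Lop A2 Vy + Lop A3 Vz) = w *\<^sub>R gradS lam U"
  shows "inner U Vt = - (inner U (KtL A1 Vx) + inner U (KtL A2 Vy) + inner U (KtL A3 Vz))"
proof -
  txt \<open>Pair with \<open>K U\<close>: the noise term drops out since \<open>gradS lam U = lam U\<close> is orthogonal to \<open>K U\<close>.\<close>
  have "inner (Kop U) (tau *\<^sub>R Kop Vt + tau *\<^sub>R (Lop A1 Vx + Lop A2 Vy + Lop A3 Vz))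
      = inner (Kop U) (w *\<^sub>R gradS lam U)"
    using assms(2) by simp
  then have "tau * (inner U Vt + (inner U (KtL A1 Vx) + inner U (KtL A2 Vy) + inner U (KtL A3 Vz))) = 0"
    by (simp add: inner_add_right inner_Kop_Kop inner_Kop_Lop gradS_def inner_Kop_self algebra_simps)
  with assms(1) show ?thesis
    by simp
qed

lemma symplectic_rk_quadratic_increment:
  fixes f :: "'a::real_inner \<Rightarrow> 'a" and D Y :: "nat \<Rightarrow> 'a"
  assumes lin: "linear f" and self_adjoint: "\<And>u v. inner u (f v) = inner v (f u)"
    and stage: "\<And>k. k < n \<Longrightarrow> Y k = F0 + h *\<^sub>R (\<Sum>j<n. A k j *\<^sub>R D j)"
    and update: "F1 = F0 + h *\<^sub>R (\<Sum>k<n. c k *\<^sub>R D k)"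
    and symp: "\<And>k j. k < n \<Longrightarrow> j < n \<Longrightarrow> c k * c j - c k * A k j - c j * A j k = 0"
  shows "inner F1 (f F1) - inner F0 (f F0) = 2 * h * (\<Sum>k<n. c k * inner (Y k) (f (D k)))"
proof -
  define G where "G k j = inner (D k) (f (D j))" for k j
  have G_sym: "G k j = G j k" for k j
    by (simp add: G_def self_adjoint)
  have f_sum: "f (\<Sum>k<n. c k *\<^sub>R D k) = (\<Sum>k<n. c k *\<^sub>R f (D k))"
    using lin by (simp add: linear_sum linear_cmul)
  have f_lin: "f (x + y) = f x + f y" "f (t *\<^sub>R x) = t *\<^sub>R f x" for x y t
    using lin by (simp_all add: linear_add linear_cmul)
  have F0_sym: "inner (D k) (f F0) = inner F0 (f (D k))" for k
    by (rule self_adjoint)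
  have lhs: "inner F1 (f F1) - inner F0 (f F0) = 2 * h * (\<Sum>k<n. c k * inner F0 (f (D k)))
      + h * h * (\<Sum>k<n. \<Sum>j<n. c k * c j * G k j)"
    unfolding update f_lin f_sum
    by (simp add: inner_add_left inner_add_right inner_sum_left inner_sum_right
        sum_distrib_left F0_sym G_def[symmetric] G_sym sum.distrib algebra_simps)
  have "(\<Sum>k<n. c k * inner (Y k) (f (D k)))
      = (\<Sum>k<n. c k * inner F0 (f (D k)) + h * (\<Sum>j<n. c k * A k j * G k j))"
    by (rule sum.cong) (simp_all add: stage inner_add_left inner_sum_left G_def[symmetric] G_sym
        sum_distrib_left algebra_simps)
  then have rhs: "2 * h * (\<Sum>k<n. c k * inner (Y k) (f (D k)))
      = 2 * h * (\<Sum>k<n. c k * inner F0 (f (D k))) + 2 * h * h * (\<Sum>k<n. \<Sum>j<n. c k * A k j * G k j)"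
    by (simp add: sum.distrib sum_distrib_left algebra_simps)
  txt \<open>The \<open>h\<^sup>2\<close> terms agree: this is where the symplecticity of the coefficients enters.\<close>
  have "(\<Sum>k<n. \<Sum>j<n. c k * A k j * G k j) = (\<Sum>k<n. \<Sum>j<n. c j * A j k * G k j)"
    by (subst sum.swap) (simp add: G_sym)
  moreover have "(\<Sum>k<n. \<Sum>j<n. (c k * c j - c k * A k j - c j * A j k) * G k j) = 0"
    by (simp add: symp)
  ultimately have "(\<Sum>k<n. \<Sum>j<n. c k * c j * G k j) = 2 * (\<Sum>k<n. \<Sum>j<n. c k * A k j * G k j)"
    by (simp add: algebra_simps sum_subtractf sum.distrib)
  with lhs rhs show ?thesis
    by (simp add: algebra_simps)
qed

lemma sum_periodic_shift_diff:
  fixes g :: "nat \<Rightarrow> 'a::ab_group_add"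
  shows "(\<Sum>i<N. g ((i + 1) mod N) - g i) = 0"
proof (cases N)
  case (Suc M)
  have "(\<Sum>i<N. g ((i + 1) mod N) - g i) = (\<Sum>i<N. g (Suc i mod N) - g (i mod N))"
    by (intro sum.cong) auto
  also have "\<dots> = 0"
    using sum_lessThan_telescope[of "\<lambda>i. g (i mod N)" N] Suc by simp
  finally show ?thesis .
qed simp

lemma periodic_line_flux_vanishes:
  fixes f :: "'a::real_inner \<Rightarrow> 'a" and F :: "nat \<Rightarrow> 'a" and Y D :: "nat \<Rightarrow> nat \<Rightarrow> 'a"
  assumes lin: "linear f" and self_adjoint: "\<And>u v. inner u (f v) = inner v (f u)"
    and "h \<noteq> 0"
    and symp: "\<And>k j. k < n \<Longrightarrow> j < n \<Longrightarrow> c k * c j - c k * A k j - c j * A j k = 0"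
    and stage: "\<And>i k. i < N \<Longrightarrow> k < n \<Longrightarrow> Y i k = F i + h *\<^sub>R (\<Sum>j<n. A k j *\<^sub>R D i j)"
    and update: "\<And>i. i < N \<Longrightarrow> F ((i + 1) mod N) = F i + h *\<^sub>R (\<Sum>k<n. c k *\<^sub>R D i k)"
  shows "(\<Sum>i<N. \<Sum>k<n. c k * inner (Y i k) (f (D i k))) = 0"
proof -
  define Q where "Q v = inner v (f v)" for v
  have line: "2 * h * (\<Sum>k<n. c k * inner (Y i k) (f (D i k))) = Q (F ((i + 1) mod N)) - Q (F i)"
    if "i < N" for i
    unfolding Q_def
    by (rule symplectic_rk_quadratic_increment[OF lin self_adjoint, symmetric])
      (use stage[OF that] update[OF that] symp in auto)
  have "2 * h * (\<Sum>i<N. \<Sum>k<n. c k * inner (Y i k) (f (D i k)))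
      = (\<Sum>i<N. Q (F ((i + 1) mod N)) - Q (F i))"
    unfolding sum_distrib_left[of "2 * h" _ "{..<N}"] by (rule sum.cong) (simp_all add: line)
  also have "\<dots> = 0"
    by (rule sum_periodic_shift_diff)
  finally show ?thesis
    using \<open>h \<noteq> 0\<close> by simp
qed

lemma periodic_flux_x_vanishes:
  fixes sigma :: nat and f :: "'a::real_inner \<Rightarrow> 'a"
    and Y Dx :: "nat \<Rightarrow> nat \<Rightarrow> nat \<Rightarrow> nat \<Rightarrow> nat \<Rightarrow> nat \<Rightarrow> nat \<Rightarrow> 'a"
    and Fx :: "nat \<Rightarrow> nat \<Rightarrow> nat \<Rightarrow> nat \<Rightarrow> nat \<Rightarrow> nat \<Rightarrow> 'a"
  assumes lin: "linear f" and self_adjoint: "\<And>u v. inner u (f v) = inner v (f u)"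
    and dx: "dx \<noteq> 0"
    and symp_x: "\<And>m n. m < s \<Longrightarrow> n < s \<Longrightarrow> btil m * btil n - btil m * atil m n - btil n * atil n m = 0"
    and stage_x: "\<And>i1 i2 i3 m p l k. i1 < N1 \<Longrightarrow> i2 < N2 \<Longrightarrow> i3 < N3 \<Longrightarrow>
        m < s \<Longrightarrow> p < iota \<Longrightarrow> l < sigma \<Longrightarrow> k < r \<Longrightarrow>
        Y i1 i2 i3 m p l k = Fx k i1 i2 i3 p l + dx *\<^sub>R (\<Sum>n<s. atil m n *\<^sub>R Dx i1 i2 i3 n p l k)"
    and update_x: "\<And>i1 i2 i3 p l k. i1 < N1 \<Longrightarrow> i2 < N2 \<Longrightarrow> i3 < N3 \<Longrightarrow>
        p < iota \<Longrightarrow> l < sigma \<Longrightarrow> k < r \<Longrightarrow>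
        Fx k ((i1 + 1) mod N1) i2 i3 p l = Fx k i1 i2 i3 p l + dx *\<^sub>R (\<Sum>m<s. btil m *\<^sub>R Dx i1 i2 i3 m p l k)"
  shows "(\<Sum>i1<N1. \<Sum>i2<N2. \<Sum>i3<N3. \<Sum>m<s. \<Sum>p<iota. \<Sum>l<sigma.
      btil m * bbar p * bhat l * (\<Sum>k<r. b k * inner (Y i1 i2 i3 m p l k) (f (Dx i1 i2 i3 m p l k)))) = 0"
proof -
  have line: "(\<Sum>i1<N1. \<Sum>m<s. btil m * inner (Y i1 i2 i3 m p l k) (f (Dx i1 i2 i3 m p l k))) = 0"
    if "i2 < N2" "i3 < N3" "p < iota" "l < sigma" "k < r" for i2 i3 p l k
    by (rule periodic_line_flux_vanishes[OF lin self_adjoint dx symp_x])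
      (use stage_x update_x that in auto)
  have "(\<Sum>i1<N1. \<Sum>i2<N2. \<Sum>i3<N3. \<Sum>m<s. \<Sum>p<iota. \<Sum>l<sigma.
      btil m * bbar p * bhat l * (\<Sum>k<r. b k * inner (Y i1 i2 i3 m p l k) (f (Dx i1 i2 i3 m p l k))))
    = (\<Sum>i2<N2. \<Sum>i3<N3. \<Sum>p<iota. \<Sum>l<sigma. \<Sum>k<r. bbar p * bhat l * b k *
      (\<Sum>i1<N1. \<Sum>m<s. btil m * inner (Y i1 i2 i3 m p l k) (f (Dx i1 i2 i3 m p l k))))"
    unfolding sum_distrib_left
    by (simp only: sum.swap[of _ "{..<N1}" "{..<N2}"] sum.swap[of _ "{..<N1}" "{..<N3}"]
        sum.swap[of _ "{..<s}" "{..<iota}"] sum.swap[of _ "{..<s}" "{..<sigma}"] sum.swap[of _ "{..<s}" "{..<r}"]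
        sum.swap[of _ "{..<N1}" "{..<iota}"] sum.swap[of _ "{..<N1}" "{..<sigma}"] sum.swap[of _ "{..<N1}" "{..<r}"])
      (simp add: mult_ac)
  also have "\<dots> = 0"
    by (simp add: line)
  finally show ?thesis .
qed

lemma periodic_flux_y_vanishes:
  fixes sigma :: nat and f :: "'a::real_inner \<Rightarrow> 'a"
    and Y Dy :: "nat \<Rightarrow> nat \<Rightarrow> nat \<Rightarrow> nat \<Rightarrow> nat \<Rightarrow> nat \<Rightarrow> nat \<Rightarrow> 'a"
    and Fy :: "nat \<Rightarrow> nat \<Rightarrow> nat \<Rightarrow> nat \<Rightarrow> nat \<Rightarrow> nat \<Rightarrow> 'a"
  assumes lin: "linear f" and self_adjoint: "\<And>u v. inner u (f v) = inner v (f u)"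
    and dy: "dy \<noteq> 0"
    and symp_y: "\<And>p q. p < iota \<Longrightarrow> q < iota \<Longrightarrow> bbar p * bbar q - bbar p * abar p q - bbar q * abar q p = 0"
    and stage_y: "\<And>i1 i2 i3 m p l k. i1 < N1 \<Longrightarrow> i2 < N2 \<Longrightarrow> i3 < N3 \<Longrightarrow>
        m < s \<Longrightarrow> p < iota \<Longrightarrow> l < sigma \<Longrightarrow> k < r \<Longrightarrow>
        Y i1 i2 i3 m p l k = Fy k i1 i2 i3 m l + dy *\<^sub>R (\<Sum>q<iota. abar p q *\<^sub>R Dy i1 i2 i3 m q l k)"
    and update_y: "\<And>i1 i2 i3 m l k. i1 < N1 \<Longrightarrow> i2 < N2 \<Longrightarrow> i3 < N3 \<Longrightarrow>
        m < s \<Longrightarrow> l < sigma \<Longrightarrow> k < r \<Longrightarrow>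
        Fy k i1 ((i2 + 1) mod N2) i3 m l = Fy k i1 i2 i3 m l + dy *\<^sub>R (\<Sum>p<iota. bbar p *\<^sub>R Dy i1 i2 i3 m p l k)"
  shows "(\<Sum>i1<N1. \<Sum>i2<N2. \<Sum>i3<N3. \<Sum>m<s. \<Sum>p<iota. \<Sum>l<sigma.
      btil m * bbar p * bhat l * (\<Sum>k<r. b k * inner (Y i1 i2 i3 m p l k) (f (Dy i1 i2 i3 m p l k)))) = 0"
proof -
  have line: "(\<Sum>i2<N2. \<Sum>p<iota. bbar p * inner (Y i1 i2 i3 m p l k) (f (Dy i1 i2 i3 m p l k))) = 0"
    if "i1 < N1" "i3 < N3" "m < s" "l < sigma" "k < r" for i1 i3 m l k
    by (rule periodic_line_flux_vanishes[OF lin self_adjoint dy symp_y])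
      (use stage_y update_y that in auto)
  have "(\<Sum>i1<N1. \<Sum>i2<N2. \<Sum>i3<N3. \<Sum>m<s. \<Sum>p<iota. \<Sum>l<sigma.
      btil m * bbar p * bhat l * (\<Sum>k<r. b k * inner (Y i1 i2 i3 m p l k) (f (Dy i1 i2 i3 m p l k))))
    = (\<Sum>i1<N1. \<Sum>i3<N3. \<Sum>m<s. \<Sum>l<sigma. \<Sum>k<r. btil m * bhat l * b k *
      (\<Sum>i2<N2. \<Sum>p<iota. bbar p * inner (Y i1 i2 i3 m p l k) (f (Dy i1 i2 i3 m p l k))))"
    unfolding sum_distrib_left
    by (simp only: sum.swap[of _ "{..<N2}" "{..<N3}"]
        sum.swap[of _ "{..<iota}" "{..<sigma}"] sum.swap[of _ "{..<iota}" "{..<r}"]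
        sum.swap[of _ "{..<N2}" "{..<s}"] sum.swap[of _ "{..<N2}" "{..<sigma}"] sum.swap[of _ "{..<N2}" "{..<r}"])
      (simp add: mult_ac)
  also have "\<dots> = 0"
    by (simp add: line)
  finally show ?thesis .
qed

lemma periodic_flux_z_vanishes:
  fixes sigma :: nat and f :: "'a::real_inner \<Rightarrow> 'a"
    and Y Dz :: "nat \<Rightarrow> nat \<Rightarrow> nat \<Rightarrow> nat \<Rightarrow> nat \<Rightarrow> nat \<Rightarrow> nat \<Rightarrow> 'a"
    and Fz :: "nat \<Rightarrow> nat \<Rightarrow> nat \<Rightarrow> nat \<Rightarrow> nat \<Rightarrow> nat \<Rightarrow> 'a"
  assumes lin: "linear f" and self_adjoint: "\<And>u v. inner u (f v) = inner v (f u)"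
    and dz: "dz \<noteq> 0"
    and symp_z: "\<And>l v. l < sigma \<Longrightarrow> v < sigma \<Longrightarrow> bhat l * bhat v - bhat l * ahat l v - bhat v * ahat v l = 0"
    and stage_z: "\<And>i1 i2 i3 m p l k. i1 < N1 \<Longrightarrow> i2 < N2 \<Longrightarrow> i3 < N3 \<Longrightarrow>
        m < s \<Longrightarrow> p < iota \<Longrightarrow> l < sigma \<Longrightarrow> k < r \<Longrightarrow>
        Y i1 i2 i3 m p l k = Fz k i1 i2 i3 m p + dz *\<^sub>R (\<Sum>v<sigma. ahat l v *\<^sub>R Dz i1 i2 i3 m p v k)"
    and update_z: "\<And>i1 i2 i3 m p k. i1 < N1 \<Longrightarrow> i2 < N2 \<Longrightarrow> i3 < N3 \<Longrightarrow>
        m < s \<Longrightarrow> p < iota \<Longrightarrow> k < r \<Longrightarrow>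
        Fz k i1 i2 ((i3 + 1) mod N3) m p = Fz k i1 i2 i3 m p + dz *\<^sub>R (\<Sum>u<sigma. bhat u *\<^sub>R Dz i1 i2 i3 m p u k)"
  shows "(\<Sum>i1<N1. \<Sum>i2<N2. \<Sum>i3<N3. \<Sum>m<s. \<Sum>p<iota. \<Sum>l<sigma.
      btil m * bbar p * bhat l * (\<Sum>k<r. b k * inner (Y i1 i2 i3 m p l k) (f (Dz i1 i2 i3 m p l k)))) = 0"
proof -
  have line: "(\<Sum>i3<N3. \<Sum>l<sigma. bhat l * inner (Y i1 i2 i3 m p l k) (f (Dz i1 i2 i3 m p l k))) = 0"
    if "i1 < N1" "i2 < N2" "m < s" "p < iota" "k < r" for i1 i2 m p k
    by (rule periodic_line_flux_vanishes[OF lin self_adjoint dz symp_z])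
      (use stage_z update_z that in auto)
  have "(\<Sum>i1<N1. \<Sum>i2<N2. \<Sum>i3<N3. \<Sum>m<s. \<Sum>p<iota. \<Sum>l<sigma.
      btil m * bbar p * bhat l * (\<Sum>k<r. b k * inner (Y i1 i2 i3 m p l k) (f (Dz i1 i2 i3 m p l k))))
    = (\<Sum>i1<N1. \<Sum>i2<N2. \<Sum>m<s. \<Sum>p<iota. \<Sum>k<r. btil m * bbar p * b k *
      (\<Sum>i3<N3. \<Sum>l<sigma. bhat l * inner (Y i1 i2 i3 m p l k) (f (Dz i1 i2 i3 m p l k))))"
    unfolding sum_distrib_left
    by (simp only: sum.swap[of _ "{..<sigma}" "{..<r}"]
        sum.swap[of _ "{..<N3}" "{..<s}"] sum.swap[of _ "{..<N3}" "{..<iota}"] sum.swap[of _ "{..<N3}" "{..<r}"])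
      (simp add: mult_ac)
  also have "\<dots> = 0"
    by (simp add: line)
  finally show ?thesis .
qed

lemma energy_eq_inner: "(norm (Epart v))\<^sup>2 + (norm (Hpart v))\<^sup>2 = inner v v"
  by (cases v) (simp add: Epart_def Hpart_def power2_norm_eq_inner)

lemma cell_energy_change:
  fixes Y Vt Vx Vy Vz :: "nat \<Rightarrow> field6"
  assumes "tau \<noteq> 0"
    and symp_t: "\<And>k j. k < r \<Longrightarrow> j < r \<Longrightarrow> b k * b j - b k * a k j - b j * a j k = 0"
    and stage_t: "\<And>k. k < r \<Longrightarrow> Y k = T0 + tau *\<^sub>R (\<Sum>j<r. a k j *\<^sub>R Vt j)"
    and update_t: "T1 = T0 + tau *\<^sub>R (\<Sum>k<r. b k *\<^sub>R Vt k)"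
    and maxwell: "\<And>k. k < r \<Longrightarrow>
      tau *\<^sub>R Kop (Vt k) + tau *\<^sub>R (Lop A1 (Vx k) + Lop A2 (Vy k) + Lop A3 (Vz k)) = w k *\<^sub>R gradS lam (Y k)"
  shows "(norm (Epart T1))\<^sup>2 + (norm (Hpart T1))\<^sup>2 - ((norm (Epart T0))\<^sup>2 + (norm (Hpart T0))\<^sup>2)
    = - 2 * tau * ((\<Sum>k<r. b k * inner (Y k) (KtL A1 (Vx k))) + (\<Sum>k<r. b k * inner (Y k) (KtL A2 (Vy k)))
        + (\<Sum>k<r. b k * inner (Y k) (KtL A3 (Vz k))))"
proof -
  have "inner T1 (id T1) - inner T0 (id T0) = 2 * tau * (\<Sum>k<r. b k * inner (Y k) (id (Vt k)))"
    by (rule symplectic_rk_quadratic_increment[OF linear_id _ stage_t update_t symp_t])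
      (simp_all add: inner_commute)
  moreover have "(\<Sum>k<r. b k * inner (Y k) (Vt k)) = - (\<Sum>k<r. b k * (inner (Y k) (KtL A1 (Vx k))
      + inner (Y k) (KtL A2 (Vy k)) + inner (Y k) (KtL A3 (Vz k))))"
    unfolding sum_negf[symmetric]
    by (rule sum.cong) (simp_all add: maxwell_stage_energy_balance[OF \<open>tau \<noteq> 0\<close> maxwell] algebra_simps)
  ultimately show ?thesis
    by (simp add: energy_eq_inner sum.distrib algebra_simps)
qed

lemma weighted_nested_sum_conserved:
  fixes sigma :: nat and w F0 F1 H1 H2 H3 :: "nat \<Rightarrow> nat \<Rightarrow> nat \<Rightarrow> nat \<Rightarrow> nat \<Rightarrow> nat \<Rightarrow> real"
  assumes change: "\<And>i1 i2 i3 m p l. i1 < N1 \<Longrightarrow> i2 < N2 \<Longrightarrow> i3 < N3 \<Longrightarrow> m < s \<Longrightarrow> p < iota \<Longrightarrow>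
      l < sigma \<Longrightarrow> F1 i1 i2 i3 m p l - F0 i1 i2 i3 m p l
        = c * (H1 i1 i2 i3 m p l + H2 i1 i2 i3 m p l + H3 i1 i2 i3 m p l)"
    and "(\<Sum>i1<N1. \<Sum>i2<N2. \<Sum>i3<N3. \<Sum>m<s. \<Sum>p<iota. \<Sum>l<sigma. w i1 i2 i3 m p l * H1 i1 i2 i3 m p l) = 0"
    and "(\<Sum>i1<N1. \<Sum>i2<N2. \<Sum>i3<N3. \<Sum>m<s. \<Sum>p<iota. \<Sum>l<sigma. w i1 i2 i3 m p l * H2 i1 i2 i3 m p l) = 0"
    and "(\<Sum>i1<N1. \<Sum>i2<N2. \<Sum>i3<N3. \<Sum>m<s. \<Sum>p<iota. \<Sum>l<sigma. w i1 i2 i3 m p l * H3 i1 i2 i3 m p l) = 0"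
  shows "(\<Sum>i1<N1. \<Sum>i2<N2. \<Sum>i3<N3. \<Sum>m<s. \<Sum>p<iota. \<Sum>l<sigma. w i1 i2 i3 m p l * F1 i1 i2 i3 m p l)
    = (\<Sum>i1<N1. \<Sum>i2<N2. \<Sum>i3<N3. \<Sum>m<s. \<Sum>p<iota. \<Sum>l<sigma. w i1 i2 i3 m p l * F0 i1 i2 i3 m p l)"
proof -
  have "(\<Sum>i1<N1. \<Sum>i2<N2. \<Sum>i3<N3. \<Sum>m<s. \<Sum>p<iota. \<Sum>l<sigma.
      w i1 i2 i3 m p l * F1 i1 i2 i3 m p l - w i1 i2 i3 m p l * F0 i1 i2 i3 m p l)
    = (\<Sum>i1<N1. \<Sum>i2<N2. \<Sum>i3<N3. \<Sum>m<s. \<Sum>p<iota. \<Sum>l<sigma.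
        c * (w i1 i2 i3 m p l * H1 i1 i2 i3 m p l) + c * (w i1 i2 i3 m p l * H2 i1 i2 i3 m p l)
        + c * (w i1 i2 i3 m p l * H3 i1 i2 i3 m p l))"
    by (intro sum.cong refl) (simp add: change flip: right_diff_distrib, simp add: algebra_simps)
  also have "\<dots> = 0"
    using assms(2-4) by (simp add: sum.distrib sum_distrib_left[symmetric])
  finally show ?thesis
    by (simp add: sum_subtractf)
qed

theorem mainTheorem3:
  fixes N1 N2 N3 Nt r s iota sigma :: nat
    and a atil abar ahat :: "nat \<Rightarrow> nat \<Rightarrow> real"
    and b btil bbar bhat :: "nat \<Rightarrow> real"
    and tau dx dy dz lam :: real
    and T :: "nat \<Rightarrow> nat \<Rightarrow> nat \<Rightarrow> nat \<Rightarrow> nat \<Rightarrow> nat \<Rightarrow> nat \<Rightarrow> field6"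
    and Y Dt Dx Dy Dz :: "nat \<Rightarrow> nat \<Rightarrow> nat \<Rightarrow> nat \<Rightarrow> nat \<Rightarrow> nat \<Rightarrow> nat \<Rightarrow> nat \<Rightarrow> field6"
    and dW :: "nat \<Rightarrow> nat \<Rightarrow> nat \<Rightarrow> nat \<Rightarrow> nat \<Rightarrow> nat \<Rightarrow> nat \<Rightarrow> nat \<Rightarrow> real"
    and Fx Fy Fz :: "nat \<Rightarrow> nat \<Rightarrow> nat \<Rightarrow> nat \<Rightarrow> nat \<Rightarrow> nat \<Rightarrow> nat \<Rightarrow> field6"
  assumes tau_pos: "tau > 0" and dx_pos: "dx > 0" and dy_pos: "dy > 0" and dz_pos: "dz > 0"
    and symp_t: "\<And>k j. k < r \<Longrightarrow> j < r \<Longrightarrow> b k * b j - b k * a k j - b j * a j k = 0"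
    and symp_y: "\<And>p q. p < iota \<Longrightarrow> q < iota \<Longrightarrow> bbar p * bbar q - bbar p * abar p q - bbar q * abar q p = 0"
    and symp_x: "\<And>m n. m < s \<Longrightarrow> n < s \<Longrightarrow> btil m * btil n - btil m * atil m n - btil n * atil n m = 0"
    and symp_z: "\<And>l v. l < sigma \<Longrightarrow> v < sigma \<Longrightarrow> bhat l * bhat v - bhat l * ahat l v - bhat v * ahat v l = 0"
    and stage_t: "\<And>\<rho> i1 i2 i3 m p l k. \<rho> \<le> Nt \<Longrightarrow> i1 < N1 \<Longrightarrow> i2 < N2 \<Longrightarrow> i3 < N3 \<Longrightarrow>
        m < s \<Longrightarrow> p < iota \<Longrightarrow> l < sigma \<Longrightarrow> k < r \<Longrightarrow>
        Y \<rho> i1 i2 i3 m p l k = T \<rho> i1 i2 i3 m p l + tau *\<^sub>R (\<Sum>j<r. a k j *\<^sub>R Dt \<rho> i1 i2 i3 m p l j)"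
    and update_t: "\<And>\<rho> i1 i2 i3 m p l. \<rho> \<le> Nt \<Longrightarrow> i1 < N1 \<Longrightarrow> i2 < N2 \<Longrightarrow> i3 < N3 \<Longrightarrow>
        m < s \<Longrightarrow> p < iota \<Longrightarrow> l < sigma \<Longrightarrow>
        T (Suc \<rho>) i1 i2 i3 m p l = T \<rho> i1 i2 i3 m p l + tau *\<^sub>R (\<Sum>k<r. b k *\<^sub>R Dt \<rho> i1 i2 i3 m p l k)"
    and stage_x: "\<And>\<rho> i1 i2 i3 m p l k. \<rho> \<le> Nt \<Longrightarrow> i1 < N1 \<Longrightarrow> i2 < N2 \<Longrightarrow> i3 < N3 \<Longrightarrow>
        m < s \<Longrightarrow> p < iota \<Longrightarrow> l < sigma \<Longrightarrow> k < r \<Longrightarrow>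
        Y \<rho> i1 i2 i3 m p l k = Fx \<rho> k i1 i2 i3 p l + dx *\<^sub>R (\<Sum>n<s. atil m n *\<^sub>R Dx \<rho> i1 i2 i3 n p l k)"
    and update_x: "\<And>\<rho> i1 i2 i3 p l k. \<rho> \<le> Nt \<Longrightarrow> i1 < N1 \<Longrightarrow> i2 < N2 \<Longrightarrow> i3 < N3 \<Longrightarrow>
        p < iota \<Longrightarrow> l < sigma \<Longrightarrow> k < r \<Longrightarrow>
        Fx \<rho> k ((i1 + 1) mod N1) i2 i3 p l = Fx \<rho> k i1 i2 i3 p l + dx *\<^sub>R (\<Sum>m<s. btil m *\<^sub>R Dx \<rho> i1 i2 i3 m p l k)"
    and stage_y: "\<And>\<rho> i1 i2 i3 m p l k. \<rho> \<le> Nt \<Longrightarrow> i1 < N1 \<Longrightarrow> i2 < N2 \<Longrightarrow> i3 < N3 \<Longrightarrow>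
        m < s \<Longrightarrow> p < iota \<Longrightarrow> l < sigma \<Longrightarrow> k < r \<Longrightarrow>
        Y \<rho> i1 i2 i3 m p l k = Fy \<rho> k i1 i2 i3 m l + dy *\<^sub>R (\<Sum>q<iota. abar p q *\<^sub>R Dy \<rho> i1 i2 i3 m q l k)"
    and update_y: "\<And>\<rho> i1 i2 i3 m l k. \<rho> \<le> Nt \<Longrightarrow> i1 < N1 \<Longrightarrow> i2 < N2 \<Longrightarrow> i3 < N3 \<Longrightarrow>
        m < s \<Longrightarrow> l < sigma \<Longrightarrow> k < r \<Longrightarrow>
        Fy \<rho> k i1 ((i2 + 1) mod N2) i3 m l = Fy \<rho> k i1 i2 i3 m l + dy *\<^sub>R (\<Sum>p<iota. bbar p *\<^sub>R Dy \<rho> i1 i2 i3 m p l k)"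
    and stage_z: "\<And>\<rho> i1 i2 i3 m p l k. \<rho> \<le> Nt \<Longrightarrow> i1 < N1 \<Longrightarrow> i2 < N2 \<Longrightarrow> i3 < N3 \<Longrightarrow>
        m < s \<Longrightarrow> p < iota \<Longrightarrow> l < sigma \<Longrightarrow> k < r \<Longrightarrow>
        Y \<rho> i1 i2 i3 m p l k = Fz \<rho> k i1 i2 i3 m p + dz *\<^sub>R (\<Sum>v<sigma. ahat l v *\<^sub>R Dz \<rho> i1 i2 i3 m p v k)"
    and update_z: "\<And>\<rho> i1 i2 i3 m p k. \<rho> \<le> Nt \<Longrightarrow> i1 < N1 \<Longrightarrow> i2 < N2 \<Longrightarrow> i3 < N3 \<Longrightarrow>
        m < s \<Longrightarrow> p < iota \<Longrightarrow> k < r \<Longrightarrow>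
        Fz \<rho> k i1 i2 ((i3 + 1) mod N3) m p = Fz \<rho> k i1 i2 i3 m p + dz *\<^sub>R (\<Sum>u<sigma. bhat u *\<^sub>R Dz \<rho> i1 i2 i3 m p u k)"
    and maxwell: "\<And>\<rho> i1 i2 i3 m p l k. \<rho> \<le> Nt \<Longrightarrow> i1 < N1 \<Longrightarrow> i2 < N2 \<Longrightarrow> i3 < N3 \<Longrightarrow>
        m < s \<Longrightarrow> p < iota \<Longrightarrow> l < sigma \<Longrightarrow> k < r \<Longrightarrow>
        tau *\<^sub>R Kop (Dt \<rho> i1 i2 i3 m p l k)
          + tau *\<^sub>R (Lop D1 (Dx \<rho> i1 i2 i3 m p l k) + Lop D2 (Dy \<rho> i1 i2 i3 m p l k) + Lop D3 (Dz \<rho> i1 i2 i3 m p l k))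
        = dW \<rho> i1 i2 i3 m p l k *\<^sub>R gradS lam (Y \<rho> i1 i2 i3 m p l k)"
  shows "\<forall>\<rho> \<le> Nt.
    (\<Sum>i1<N1. \<Sum>i2<N2. \<Sum>i3<N3. \<Sum>m<s. \<Sum>p<iota. \<Sum>l<sigma.
        btil m * bbar p * bhat l * ((norm (Epart (T (Suc \<rho>) i1 i2 i3 m p l)))\<^sup>2 + (norm (Hpart (T (Suc \<rho>) i1 i2 i3 m p l)))\<^sup>2))
  = (\<Sum>i1<N1. \<Sum>i2<N2. \<Sum>i3<N3. \<Sum>m<s. \<Sum>p<iota. \<Sum>l<sigma.
        btil m * bbar p * bhat l * ((norm (Epart (T \<rho> i1 i2 i3 m p l)))\<^sup>2 + (norm (Hpart (T \<rho> i1 i2 i3 m p l)))\<^sup>2))"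
proof (intro allI impI, goal_cases)
  case (1 \<rho>)
  then have \<rho>: "\<rho> \<le> Nt" .
  have "dx \<noteq> 0" "dy \<noteq> 0" "dz \<noteq> 0" "tau \<noteq> 0"
    using dx_pos dy_pos dz_pos tau_pos by simp_all
  note flux_x = periodic_flux_x_vanishes[where Y="Y \<rho>" and Dx="Dx \<rho>" and Fx="Fx \<rho>"
      and bbar=bbar and bhat=bhat and b=b,
      OF linear_KtL KtL_self_adjoint[OF skew_D1] \<open>dx \<noteq> 0\<close> symp_x stage_x[OF \<rho>] update_x[OF \<rho>]]
    and flux_y = periodic_flux_y_vanishes[where Y="Y \<rho>" and Dy="Dy \<rho>" and Fy="Fy \<rho>"
      and btil=btil and bhat=bhat and b=b,
      OF linear_KtL KtL_self_adjoint[OF skew_D2] \<open>dy \<noteq> 0\<close> symp_y stage_y[OF \<rho>] update_y[OF \<rho>]]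
    and flux_z = periodic_flux_z_vanishes[where Y="Y \<rho>" and Dz="Dz \<rho>" and Fz="Fz \<rho>"
      and btil=btil and bbar=bbar and b=b,
      OF linear_KtL KtL_self_adjoint[OF skew_D3] \<open>dz \<noteq> 0\<close> symp_z stage_z[OF \<rho>] update_z[OF \<rho>]]
  note cell = cell_energy_change[OF \<open>tau \<noteq> 0\<close> symp_t stage_t[OF \<rho>] update_t[OF \<rho>] maxwell[OF \<rho>]]
  show ?case
    by (rule weighted_nested_sum_conserved[OF _ flux_x flux_y flux_z]) (rule cell)
qed

end
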